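(* Let $q$ be a prime power and $n\ge4$. Then $$\mathbb{E}_q(n,1)=2^{\left\lfloor\log_2\left(\frac{q^{n-1}-1}{q-1}+1\right)\right\rfloor}\le\mathbb{E}_q(n).$$ Moreover, there is an equidistant linear code in $\mathbb{P}_q(n)$ with constant distance $2$ and of size $\mathbb{E}_q(n,1)$ whose nontrivial part is contained in a sunflower $\{V\in\mathbb{G}_q(n,2): W\subset V\}$ for some $W\in\mathbb{G}_q(n,1)$.
   Context: $\mathbb{P}_q(n)$ denotes the set of all subspaces of $\mathbb{F}_q^n$ and $\mathbb{G}_q(n,k)$ the set of $k$-dimensional subspaces. For subspaces $X,Y$ the subspace distance is $d_S(X,Y)=\dim X+\dim Y-2\dim(X\cap Y)$. A linear code in $\mathbb{P}_q(n)$ is a subset $\mathcal{U}\subseteq\mathbb{P}_q(n)$ with $\{0\}\in\mathcal{U}$ for which there exists a map $\boxplus:\mathcal{U}\times\mathcal{U}\to\mathcal{U}$ such that (i) $(\mathcal{U},\boxplus)$ is an abelian group; (ii) its identity element is $\{0\}$; (iii) $X\boxplus X=\{0\}$ for all $X\in\mathcal{U}$; (iv) $d_S(Y_1\boxplus X,Y_2\boxplus X)=d_S(Y_1,Y_2)$ for all $Y_1,Y_2,X\in\mathcal{U}$. Its nontrivial part is $\mathcal{U}\setminus\{\{0\}\}$. It is equidistant with constant distance $r$ if $d_S(X,Y)=r$ for all distinct $X,Y\in\mathcal{U}$. $\mathbb{E}_q(n)$ denotes the maximum size of an equidistant linear code in $\mathbb{P}_q(n)$, and $\mathbb{E}_q(n,d)$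 the maximum size of an equidistant linear code in $\mathbb{P}_q(n)$ with constant distance $2d$. A sunflower is a family of $k$-subspaces any two distinct members of which intersect in the same fixed subspace (its center). *)

theory Defs
  imports "HOL-Analysis.Analysis"
begin

text \<open>The ambient space F_q^n is modelled as 'a^'n with 'a a finite field (so q = CARD('a))
  and n = CARD('n). Subspaces are vec.subspace, dimension is vec.dim.\<close>

definition all_subspaces :: "'a::field itself \<Rightarrow> 'n::finite itself \<Rightarrow> ('a^'n) set set" where
  "all_subspaces _ _ = {X. vec.subspace X}"

definition grass :: "'a::field itself \<Rightarrow> 'n::finite itself \<Rightarrow> nat \<Rightarrow> ('a^'n) set set" where
  "grass _ _ k = {X. vec.subspace X \<and> vec.dim X = k}"

definition subspace_dist :: "('a::field^'n::finite) set \<Rightarrow> ('a^'n) set \<Rightarrow> nat" where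
  "subspace_dist X Y = vec.dim X + vec.dim Y - 2 * vec.dim (X \<inter> Y)"

definition linear_code :: "('a::field^'n::finite) set set \<Rightarrow> bool" where
  "linear_code U \<longleftrightarrow> U \<subseteq> {X. vec.subspace X} \<and> {0} \<in> U \<and>
     (\<exists>pl :: ('a^'n) set \<Rightarrow> ('a^'n) set \<Rightarrow> ('a^'n) set.
        (\<forall>X\<in>U. \<forall>Y\<in>U. pl X Y \<in> U) \<and>
        (\<forall>X\<in>U. \<forall>Y\<in>U. \<forall>Z\<in>U. pl (pl X Y) Z = pl X (pl Y Z)) \<and>
        (\<forall>X\<in>U. \<forall>Y\<in>U. pl X Y = pl Y X) \<and>
        (\<forall>X\<in>U. pl {0} X = X \<and> pl X {0} = X) \<and>
        (\<forall>X\<in>U. \<exists>Y\<in>U. pl X Y = {0}) \<and>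
        (\<forall>X\<in>U. pl X X = {0}) \<and>
        (\<forall>Y1\<in>U. \<forall>Y2\<in>U. \<forall>X\<in>U. subspace_dist (pl Y1 X) (pl Y2 X) = subspace_dist Y1 Y2))"

definition equidistant :: "('a::field^'n::finite) set set \<Rightarrow> nat \<Rightarrow> bool" where
  "equidistant U r \<longleftrightarrow> (\<forall>X\<in>U. \<forall>Y\<in>U. X \<noteq> Y \<longrightarrow> subspace_dist X Y = r)"

definition Eq_max :: "'a::field itself \<Rightarrow> 'n::finite itself \<Rightarrow> nat" where
  "Eq_max _ _ = Max {card U | U :: ('a^'n) set set. linear_code U \<and> (\<exists>r. equidistant U r)}"

definition Eq_dist :: "'a::field itself \<Rightarrow> 'n::finite itself \<Rightarrow> nat \<Rightarrow> nat" where
  "Eq_dist _ _ d = Max {card U | U :: ('a^'n) set set. linear_code U \<and> equidistant U (2 * d)}"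

end

theory Submission
  imports Defs "HOL-Algebra.Sylow" "HOL-Algebra.Multiplicative_Group" "HOL-Library.Discrete_Functions"
begin

text \<open>
  In an equidistant linear code with distance 2 every nontrivial codeword is a plane (distance
  2 from the zero space), and any two of them meet in a line. Such a family of planes either
  contains a common line, and then has at most as many members as there are planes through a
  line, namely N = (q^(n-1) - 1)/(q - 1); or it lies in a 3-dimensional space, and then it has
  at most q^2 + q + 1 \<le> N members since n \<ge> 4. The code is an abelian group in which
  every element is its own inverse, so by Sylow's theorem its size is a power of 2; hence it
  has at most 2^\<lfloor>log2 (N + 1)\<rfloor> elements. Conversely, any 2^K - 1 planes through
  a fixed line, together with the zero space, are pairwise at distance 2, and symmetric
  difference on the subsets of a K-element set, transported along a bijection, turns every
  equidistant family of 2^K subspaces containing the zero space into a linear code.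
\<close>

section \<open>Counting subspaces over a finite field\<close>

lemma card_span_independent:
  fixes B :: "('a::{finite,field}^'n::finite) set"
  assumes "vec.independent B"
  shows "card (vec.span B) = CARD('a) ^ card B"
proof -
  have "finite B" by simp
  then show ?thesis using assms
  proof (induction B rule: finite_induct)
    case empty
    then show ?case by simp
  next
    case (insert b B)
    have indep: "vec.independent B" using insert.prems vec.independent_mono by blast
    have b_notin: "b \<notin> vec.span B"
      using insert.prems insert.hyps(2) by (simp add: vec.independent_insert)
    define f where "f = (\<lambda>(c, y). c *s b + y)"
    have "vec.span (insert b B) = f ` (UNIV \<times> vec.span B)"
    proof (intro equalityI subsetI)
      fix x assume "x \<in> vec.span (insert b B)"
      then obtain c where "x - c *s b \<in> vec.span B" using vec.span_breakdown_eq by blast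
      then show "x \<in> f ` (UNIV \<times> vec.span B)"
        unfolding f_def by (intro image_eqI[of _ _ "(c, x - c *s b)"]) auto
    next
      fix x assume "x \<in> f ` (UNIV \<times> vec.span B)"
      then obtain c y where "x = c *s b + y" "y \<in> vec.span B" unfolding f_def by auto
      moreover have "y \<in> vec.span (insert b B)"
        using \<open>y \<in> vec.span B\<close> vec.span_mono[of B "insert b B"] by blast
      moreover have "b \<in> vec.span (insert b B)" by (simp add: vec.span_base)
      ultimately show "x \<in> vec.span (insert b B)" by (simp add: vec.span_add vec.span_scale)
    qed
    moreover have "inj_on f (UNIV \<times> vec.span B)"
    proof (rule inj_onI, clarify)
      fix c y c' y'
      assume y: "y \<in> vec.span B" "y' \<in> vec.span B" and eq: "f (c, y) = f (c', y')"
      have "(c - c') *s b = (c *s b + y) - (c' *s b + y)" by simp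
      also have "\<dots> = y' - y" using eq by (simp add: f_def)
      finally have "(c - c') *s b \<in> vec.span B" using vec.span_diff[OF y(2) y(1)] by simp
      have "c = c'"
      proof (rule ccontr)
        assume "c \<noteq> c'"
        then have "inverse (c - c') * (c - c') = 1" by simp
        then have "b = inverse (c - c') *s ((c - c') *s b)" by (simp only: vec.scale_scale vec.scale_one)
        also have "\<dots> \<in> vec.span B" using \<open>(c - c') *s b \<in> vec.span B\<close> by (rule vec.span_scale)
        finally show False using b_notin by simp
      qed
      then show "c = c' \<and> y = y'" using eq by (simp add: f_def)
    qed
    ultimately have "card (vec.span (insert b B)) = CARD('a) * card (vec.span B)"
      by (simp add: card_image card_cartesian_product)
    then show ?case using insert.IH[OF indep] insert.hyps by simp
  qed
qed

lemma card_subspace: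
  fixes X :: "('a::{finite,field}^'n::finite) set"
  assumes "vec.subspace X"
  shows "card X = CARD('a) ^ vec.dim X"
proof -
  obtain B where "B \<subseteq> X" "vec.independent B" "X \<subseteq> vec.span B" "card B = vec.dim X"
    using vec.basis_exists by blast
  moreover have "vec.span B = X"
    using calculation assms vec.span_minimal by blast
  ultimately show ?thesis using card_span_independent by metis
qed

lemma card_field_ge_2: "CARD('a::{finite,field}) \<ge> 2"
proof -
  have "card {0::'a, 1} = 2" by simp
  then show ?thesis using card_mono[of UNIV "{0::'a, 1}"] by simp
qed

lemma dim_span_insert_subspace:
  fixes L :: "('a::field^'n::finite) set"
  assumes "vec.subspace L" "x \<notin> L"
  shows "vec.dim (vec.span (insert x L)) = Suc (vec.dim L)"
proof -
  have "x \<notin> vec.span L" using assms vec.span_eq_iff by metis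
  then show ?thesis using vec.dim_insert[of x L] by simp
qed

lemma span_insert_eq_subspace:
  fixes L V :: "('a::field^'n::finite) set"
  assumes "vec.subspace L" "vec.subspace V" "L \<subseteq> V" "x \<in> V - L"
    and "vec.dim V = Suc (vec.dim L)"
  shows "vec.span (insert x L) = V"
proof (rule vec.subspace_dim_equal)
  show "vec.span (insert x L) \<subseteq> V" using assms(2-4) by (simp add: vec.span_minimal)
  show "vec.dim V \<le> vec.dim (vec.span (insert x L))"
    using assms(4,5) dim_span_insert_subspace[OF assms(1), of x] by simp
qed (simp_all add: assms(2))

lemma dim_Int_less:
  fixes X Y :: "('a::field^'n::finite) set"
  assumes "vec.subspace X" "vec.subspace Y" "\<not> X \<subseteq> Y"
  shows "vec.dim (X \<inter> Y) < vec.dim X"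
proof (rule ccontr)
  assume "\<not> ?thesis"
  then have "X \<inter> Y = X"
    using vec.subspace_dim_equal[OF vec.subspace_inter[OF assms(1,2)] assms(1)] by simp
  then show False using assms(3) by blast
qed

lemma card_subspaces_between_mult:
  fixes L T :: "('a::{finite,field}^'n::finite) set"
  assumes L: "vec.subspace L" and T: "vec.subspace T" "L \<subseteq> T"
  shows "card {V. vec.subspace V \<and> vec.dim V = Suc (vec.dim L) \<and> L \<subseteq> V \<and> V \<subseteq> T}
           * (CARD('a) ^ Suc (vec.dim L) - CARD('a) ^ vec.dim L)
         = CARD('a) ^ vec.dim T - CARD('a) ^ vec.dim L"
proof -
  define P where "P = {V. vec.subspace V \<and> vec.dim V = Suc (vec.dim L) \<and> L \<subseteq> V \<and> V \<subseteq> T}"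
  \<comment> \<open>the sets \<open>V - L\<close> partition \<open>T - L\<close>: a vector \<open>x \<notin> L\<close> lies only in \<open>V = span (insert x L)\<close>\<close>
  have "(\<Union>V\<in>P. V - L) = T - L"
  proof (intro equalityI subsetI)
    fix x assume x: "x \<in> T - L"
    have "L \<subseteq> vec.span (insert x L)" using vec.span_superset[of "insert x L"] by blast
    then have "vec.span (insert x L) \<in> P"
      using x T dim_span_insert_subspace[OF L] by (simp add: P_def vec.span_minimal)
    moreover have "x \<in> vec.span (insert x L)" by (simp add: vec.span_base)
    ultimately show "x \<in> (\<Union>V\<in>P. V - L)" using x by blast
  qed (auto simp: P_def)
  moreover have "(V - L) \<inter> (V' - L) = {}" if V: "V \<in> P" "V' \<in> P" "V \<noteq> V'" for V V'
  proof -
    have "V = V'" if x: "x \<in> V - L" "x \<in> V' - L" for x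
      using span_insert_eq_subspace[OF L, of V x] span_insert_eq_subspace[OF L, of V' x] x V(1,2)
      unfolding P_def by simp
    then show ?thesis using V(3) by blast
  qed
  ultimately have "card (T - L) = (\<Sum>V\<in>P. card (V - L))"
    using card_UN_disjoint[of P "\<lambda>V. V - L"] by simp
  also have "\<dots> = (\<Sum>V\<in>P. CARD('a) ^ Suc (vec.dim L) - CARD('a) ^ vec.dim L)"
    using L by (intro sum.cong) (auto simp: P_def card_Diff_subset card_subspace)
  finally show ?thesis
    using T card_Diff_subset[OF _ T(2)] by (simp add: P_def card_subspace L)
qed

lemma power_Suc_Suc_diff_eq:
  fixes q :: nat
  shows "q ^ Suc (Suc d) - q ^ d = (q + 1) * (q ^ Suc d - q ^ d)"
  by (simp add: diff_mult_distrib2 algebra_simps)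

lemma card_intermediate_subspaces:
  fixes L T :: "('a::{finite,field}^'n::finite) set"
  assumes "vec.subspace L" "vec.subspace T" "L \<subseteq> T"
    and "vec.dim T = Suc (Suc (vec.dim L))"
  shows "card {V. vec.subspace V \<and> vec.dim V = Suc (vec.dim L) \<and> L \<subseteq> V \<and> V \<subseteq> T}
           = CARD('a) + 1"
proof -
  let ?P = "{V. vec.subspace V \<and> vec.dim V = Suc (vec.dim L) \<and> L \<subseteq> V \<and> V \<subseteq> T}"
  let ?k = "CARD('a) ^ Suc (vec.dim L) - CARD('a) ^ vec.dim L"
  have "?k \<noteq> 0" using card_field_ge_2[where 'a='a] by simp
  then have "card ?P * ?k = (CARD('a) + 1) * ?k \<longleftrightarrow> card ?P = CARD('a) + 1"
    by (rule mult_right_cancel)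
  moreover have "card ?P * ?k = (CARD('a) + 1) * ?k"
    using card_subspaces_between_mult[OF assms(1-3)] assms(4) power_Suc_Suc_diff_eq by metis
  ultimately show ?thesis by blast
qed

lemma geometric_sum_nat:
  fixes q :: nat
  shows "(q - 1) * (\<Sum>i<m. q ^ i) = q ^ m - 1"
proof (induction m)
  case (Suc m)
  then show ?case
    by (cases q) (simp_all add: algebra_simps diff_mult_distrib2)
qed simp

lemma geometric_sum_real_eq:
  fixes q :: nat
  assumes "q \<ge> 2"
  shows "(real q ^ m - 1) / (real q - 1) = real (\<Sum>i<m. q ^ i)"
  using assms power_diff_1_eq[of "real q" m] by simp

lemma card_planes_through_line:
  fixes L :: "('a::{finite,field}^'n::finite) set"
  assumes "vec.subspace L" "vec.dim L = 1"
  shows "card {V. vec.subspace V \<and> vec.dim V = 2 \<and> L \<subseteq> V} = (\<Sum>i<CARD('n) - 1. CARD('a) ^ i)"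
proof -
  let ?P = "{V. vec.subspace V \<and> vec.dim V = 2 \<and> L \<subseteq> V}"
  let ?q = "CARD('a)" and ?n = "CARD('n)"
  let ?k = "?q ^ 2 - ?q"
  have "?k \<noteq> 0" using card_field_ge_2[where 'a='a] by (simp add: power2_eq_square)
  then have "card ?P * ?k = (\<Sum>i<?n - 1. ?q ^ i) * ?k \<longleftrightarrow> card ?P = (\<Sum>i<?n - 1. ?q ^ i)"
    by (rule mult_right_cancel)
  moreover have "card ?P * ?k = ?q ^ ?n - ?q"
    using card_subspaces_between_mult[OF assms(1) vec.subspace_UNIV, unfolded vec_dim_card] assms(2)
    by (simp add: numeral_2_eq_2)
  moreover have "(\<Sum>i<?n - 1. ?q ^ i) * ?k = ?q ^ ?n - ?q"
  proof -
    have "(\<Sum>i<?n - 1. ?q ^ i) * ?k = ?q * ((?q - 1) * (\<Sum>i<?n - 1. ?q ^ i))"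
      by (simp add: power2_eq_square algebra_simps diff_mult_distrib2)
    also have "\<dots> = ?q * ?q ^ (?n - 1) - ?q"
      by (simp only: geometric_sum_nat diff_mult_distrib2 mult_1_right)
    also have "?q * ?q ^ (?n - 1) = ?q ^ ?n"
      using power_Suc[of ?q "?n - 1"] by simp
    finally show ?thesis .
  qed
  ultimately show ?thesis by simp
qed

section \<open>Families of planes pairwise meeting in lines\<close>

lemma planes_share_line_or_lie_in_solid:
  fixes F :: "('a::field^'n::finite) set set"
  assumes planes: "\<And>V. V \<in> F \<Longrightarrow> vec.subspace V \<and> vec.dim V = 2"
    and meet: "\<And>V V'. V \<in> F \<Longrightarrow> V' \<in> F \<Longrightarrow> V \<noteq> V' \<Longrightarrow> vec.dim (V \<inter> V') = 1"
    and AB: "A \<in> F" "B \<in> F" "A \<noteq> B"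
  shows "(\<forall>V\<in>F. A \<inter> B \<subseteq> V) \<or> (\<forall>V\<in>F. V \<subseteq> {x + y | x y. x \<in> A \<and> y \<in> B})"
proof -
  define L where "L = A \<inter> B"
  define S where "S = {x + y | x y. x \<in> A \<and> y \<in> B}"
  have A: "vec.subspace A" and B: "vec.subspace B" using planes AB by auto
  have L: "vec.subspace L" "vec.dim L = 1" using vec.subspace_inter[OF A B] meet[OF AB] by (simp_all add: L_def)
  have S: "vec.subspace S" unfolding S_def by (rule vec.subspace_sums[OF A B])
  have AS: "A \<subseteq> S"
  proof
    fix x assume "x \<in> A"
    then show "x \<in> S" using vec.subspace_0[OF B] unfolding S_def by force
  qed
  have outside_L: "D \<subseteq> S" if D: "D \<in> F" "\<not> L \<subseteq> D" for D
  proof -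
    define l1 where "l1 = D \<inter> A"
    define l2 where "l2 = D \<inter> B"
    have sD: "vec.subspace D" "vec.dim D = 2" using planes D(1) by auto
    have "D \<noteq> A" "D \<noteq> B" using D(2) unfolding L_def by auto
    then have l: "vec.subspace l1" "vec.dim l1 = 1" "vec.subspace l2" "vec.dim l2 = 1"
      using meet[OF D(1)] AB vec.subspace_inter sD(1) A B unfolding l1_def l2_def by auto
    have "\<not> l1 \<subseteq> l2"
    proof
      assume "l1 \<subseteq> l2"
      then have "l1 \<subseteq> L" unfolding l1_def l2_def L_def by blast
      then have "l1 = L" using vec.subspace_dim_equal[OF l(1) L(1)] l(2) L(2) by simp
      then show False using D(2) unfolding l1_def by blast
    qed
    then have "vec.dim (l1 \<inter> l2) = 0" using dim_Int_less[OF l(1,3)] l(2) by simp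
    then have "vec.dim {x + y | x y. x \<in> l1 \<and> y \<in> l2} = 2"
      using vec.dim_sums_Int[OF l(1,3)] l(2,4) by linarith
    moreover have "{x + y | x y. x \<in> l1 \<and> y \<in> l2} \<subseteq> D"
      using vec.subspace_add[OF sD(1)] unfolding l1_def l2_def by blast
    ultimately have "{x + y | x y. x \<in> l1 \<and> y \<in> l2} = D"
      using vec.subspace_dim_equal[OF vec.subspace_sums[OF l(1,3)] sD(1)] sD(2) by simp
    moreover have "{x + y | x y. x \<in> l1 \<and> y \<in> l2} \<subseteq> S"
      unfolding l1_def l2_def S_def by blast
    ultimately show "D \<subseteq> S" by simp
  qed
  show ?thesis
  proof (cases "\<forall>V\<in>F. L \<subseteq> V")
    case False
    then obtain C where C: "C \<in> F" "\<not> L \<subseteq> C" by blast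
    have "D \<subseteq> S" if D: "D \<in> F" for D
    proof (rule ccontr)
      assume not_in_S: "\<not> D \<subseteq> S"
      have sD: "vec.subspace D" "vec.dim D = 2" using planes D by auto
      have LD: "L \<subseteq> D" using outside_L D not_in_S by blast
      have "vec.dim (D \<inter> S) < 2" using dim_Int_less[OF sD(1) S] not_in_S sD(2) by simp
      moreover have "L \<subseteq> D \<inter> S" using LD AS unfolding L_def by blast
      ultimately have "D \<inter> S = L"
        using vec.subspace_dim_equal[OF L(1) vec.subspace_inter[OF sD(1) S]] L(2) by simp
      moreover have "D \<inter> C \<subseteq> D \<inter> S" using outside_L[OF C] by blast
      ultimately have "D \<inter> C \<subseteq> L" by simp
      moreover have "D \<noteq> C" using LD C(2) by blast
      then have "vec.dim (D \<inter> C) = 1" using meet D C(1) by blast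
      ultimately have "D \<inter> C = L"
        using vec.subspace_dim_equal[OF vec.subspace_inter[OF sD(1)] L(1)] planes[OF C(1)] L(2) by simp
      then show False using C(2) by blast
    qed
    then show ?thesis unfolding S_def by blast
  qed (simp add: L_def)
qed

lemma card_planes_in_solid_le:
  fixes F :: "('a::{finite,field}^'n::finite) set set"
  assumes S: "vec.subspace S" "vec.dim S = 3"
    and planes: "\<And>V. V \<in> F \<Longrightarrow> vec.subspace V \<and> vec.dim V = 2 \<and> V \<subseteq> S"
    and meet: "\<And>V V'. V \<in> F \<Longrightarrow> V' \<in> F \<Longrightarrow> V \<noteq> V' \<Longrightarrow> vec.dim (V \<inter> V') = 1"
  shows "card F \<le> CARD('a) ^ 2 + CARD('a) + 1"
proof (cases "F = {}")
  case False
  then obtain A where A: "A \<in> F" by blast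
  have sA: "vec.subspace A" "vec.dim A = 2" "A \<subseteq> S" using planes[OF A] by auto
  define lines where "lines = {l. vec.subspace l \<and> vec.dim l = 1 \<and> l \<subseteq> A}"
  define pencil where "pencil l = {V. vec.subspace V \<and> vec.dim V = Suc (vec.dim l) \<and> l \<subseteq> V \<and> V \<subseteq> S}" for l
  have "{0} \<subseteq> A" using vec.subspace_0[OF sA(1)] by simp
  moreover have "vec.dim A = Suc (Suc (vec.dim {0::'a^'n}))" using sA(2) by (simp add: numeral_2_eq_2)
  ultimately have "card {l. vec.subspace l \<and> vec.dim l = Suc (vec.dim {0::'a^'n}) \<and> {0} \<subseteq> l \<and> l \<subseteq> A}
      = CARD('a) + 1"
    by (rule card_intermediate_subspaces[OF vec.subspace_single_0 sA(1)])
  moreover have "{l. vec.subspace l \<and> vec.dim l = Suc (vec.dim {0::'a^'n}) \<and> {0} \<subseteq> l \<and> l \<subseteq> A} = lines"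
    unfolding lines_def using vec.subspace_0 by auto
  ultimately have card_lines: "card lines = CARD('a) + 1" by simp
  have card_pencil: "card (pencil l - {A}) = CARD('a)" if l: "l \<in> lines" for l
  proof -
    have sl: "vec.subspace l" "vec.dim l = 1" "l \<subseteq> A" using l unfolding lines_def by auto
    have "vec.dim S = Suc (Suc (vec.dim l))" using S(2) sl(2) by simp
    then have "card (pencil l) = CARD('a) + 1"
      unfolding pencil_def using sl(3) sA(3)
      by (intro card_intermediate_subspaces[OF sl(1) S(1)]) auto
    moreover have "A \<in> pencil l" using sl sA unfolding pencil_def by simp
    ultimately show ?thesis by simp
  qed
  have "F - {A} \<subseteq> (\<Union>l\<in>lines. pencil l - {A})"
  proof
    fix V assume V: "V \<in> F - {A}"
    have sV: "vec.subspace V" "vec.dim V = 2" "V \<subseteq> S" using planes V by auto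
    have l: "vec.subspace (A \<inter> V)" "vec.dim (A \<inter> V) = 1"
      using vec.subspace_inter[OF sA(1) sV(1)] meet[OF A] V by auto
    then have "A \<inter> V \<in> lines" "V \<in> pencil (A \<inter> V)"
      using sV unfolding lines_def pencil_def by auto
    then show "V \<in> (\<Union>l\<in>lines. pencil l - {A})" using V by blast
  qed
  then have "card (F - {A}) \<le> card (\<Union>l\<in>lines. pencil l - {A})" by (simp add: card_mono)
  also have "\<dots> \<le> (\<Sum>l\<in>lines. card (pencil l - {A}))" by (rule card_UN_le) simp
  also have "\<dots> = (CARD('a) + 1) * CARD('a)" using card_lines card_pencil by simp
  finally have "card (F - {A}) \<le> (CARD('a) + 1) * CARD('a)" .
  then show ?thesis using A by (simp add: card_Diff_singleton power2_eq_square algebra_simps)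
qed simp

lemma card_planes_pairwise_meeting_le:
  fixes F :: "('a::{finite,field}^'n::finite) set set"
  assumes n: "CARD('n) \<ge> 4"
    and planes: "\<And>V. V \<in> F \<Longrightarrow> vec.subspace V \<and> vec.dim V = 2"
    and meet: "\<And>V V'. V \<in> F \<Longrightarrow> V' \<in> F \<Longrightarrow> V \<noteq> V' \<Longrightarrow> vec.dim (V \<inter> V') = 1"
  shows "card F \<le> (\<Sum>i<CARD('n) - 1. CARD('a) ^ i)"
proof (cases "card F \<le> 1")
  case True
  then show ?thesis using n by (simp add: lessThan_atLeast0 sum.atLeast_Suc_lessThan)
next
  case False
  then obtain A B where AB: "A \<in> F" "B \<in> F" "A \<noteq> B"
    using card_le_Suc0_iff_eq[of F] by auto
  have sA: "vec.subspace A" and sB: "vec.subspace B" using planes AB by auto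
  consider "\<forall>V\<in>F. A \<inter> B \<subseteq> V" | "\<forall>V\<in>F. V \<subseteq> {x + y | x y. x \<in> A \<and> y \<in> B}"
    using planes_share_line_or_lie_in_solid[OF planes meet AB] by blast
  then show ?thesis
  proof cases
    case 1
    then have "F \<subseteq> {V. vec.subspace V \<and> vec.dim V = 2 \<and> A \<inter> B \<subseteq> V}" using planes by blast
    then have "card F \<le> card {V. vec.subspace V \<and> vec.dim V = 2 \<and> A \<inter> B \<subseteq> V}"
      by (intro card_mono) simp_all
    also have "\<dots> = (\<Sum>i<CARD('n) - 1. CARD('a) ^ i)"
      using card_planes_through_line vec.subspace_inter[OF sA sB] meet[OF AB] by blast
    finally show ?thesis .
  next
    case 2
    let ?S = "{x + y | x y. x \<in> A \<and> y \<in> B}"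
    have dim_S: "vec.dim ?S = 3" using vec.dim_sums_Int[OF sA sB] planes AB meet[OF AB] by simp
    have in_S: "vec.subspace V \<and> vec.dim V = 2 \<and> V \<subseteq> ?S" if "V \<in> F" for V
      using planes[OF that] 2 that by simp
    have "card F \<le> CARD('a) ^ 2 + CARD('a) + 1"
      by (rule card_planes_in_solid_le[OF vec.subspace_sums[OF sA sB] dim_S in_S meet])
    also have "\<dots> = (\<Sum>i<3. CARD('a) ^ i)" by (simp add: eval_nat_numeral)
    also have "\<dots> \<le> (\<Sum>i<CARD('n) - 1. CARD('a) ^ i)" using n by (intro sum_mono2) auto
    finally show ?thesis .
  qed
qed

section \<open>Groups of exponent 2\<close>

lemma power_of_two_if_prime_factors_two:
  fixes n :: nat
  assumes "n > 0" and "\<And>p. prime p \<Longrightarrow> p dvd n \<Longrightarrow> p = 2"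
  shows "\<exists>m. n = 2 ^ m"
  using assms
proof (induction n rule: less_induct)
  case (less n)
  show ?case
  proof (cases "n = 1")
    case False
    then obtain p where "prime p" "p dvd n" using prime_factor_nat by blast
    then have "2 dvd n" using less.prems by blast
    then obtain k where k: "n = 2 * k" by blast
    have "\<exists>m. k = 2 ^ m"
    proof (rule less.IH)
      show "k < n" "k > 0" using k less.prems(1) by simp_all
      show "p = 2" if "prime p" "p dvd k" for p
        using less.prems(2)[OF that(1)] that(2) k by simp
    qed
    then show ?thesis using k by (metis power_Suc)
  qed (auto intro: exI[of _ 0])
qed

lemma (in group) pow_card_subgroup_eq_one:
  assumes "subgroup H G" "x \<in> H"
  shows "x [^] card H = \<one>"
proof -
  have HG: "group (G\<lparr>carrier := H\<rparr>)" using assms(1) by (rule subgroup_imp_group)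
  have "x [^] card H = x [^]\<^bsub>G\<lparr>carrier := H\<rparr>\<^esub> order (G\<lparr>carrier := H\<rparr>)"
    using nat_pow_consistent[of x "card H" H] unfolding order_def by simp
  also have "\<dots> = \<one>" using group.pow_order_eq_1[OF HG, of x] assms(2) by simp
  finally show ?thesis .
qed

lemma (in group) pow_odd_eq_self_if_square_one:
  assumes "x \<in> carrier G" "x \<otimes> x = \<one>"
  shows "x [^] Suc (2 * k) = x"
proof (induction k)
  case 0
  show ?case using assms(1) by simp
next
  case (Suc k)
  have "x [^] Suc (2 * Suc k) = x [^] Suc (2 * k) \<otimes> (x \<otimes> x)"
    using assms(1) by (simp add: m_assoc)
  then show ?case using Suc assms by simp
qed

lemma (in group) subgroup_odd_card_trivial:
  assumes H: "subgroup H G" "card H = Suc (2 * k)"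
    and square_one: "\<And>x. x \<in> carrier G \<Longrightarrow> x \<otimes> x = \<one>"
  shows "H \<subseteq> {\<one>}"
proof (rule subsetI)
  fix x assume xH: "x \<in> H"
  have xG: "x \<in> carrier G" by (rule subgroup.mem_carrier[OF H(1) xH])
  have "\<one> = x [^] card H" using pow_card_subgroup_eq_one[OF H(1) xH] by simp
  also have "\<dots> = x" using pow_odd_eq_self_if_square_one[OF xG square_one[OF xG]] H(2) by simp
  finally show "x \<in> {\<one>}" by simp
qed

lemma (in group) order_power_of_two_if_square_one:
  assumes "finite (carrier G)" and square_one: "\<And>x. x \<in> carrier G \<Longrightarrow> x \<otimes> x = \<one>"
  shows "\<exists>m. order G = 2 ^ m"
proof (rule power_of_two_if_prime_factors_two)
  show "order G > 0" using assms(1) by (simp add: order_gt_0_iff_finite)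
  fix p :: nat assume p: "prime p" "p dvd order G"
  show "p = 2"
  proof (rule ccontr)
    assume "p \<noteq> 2"
    then have "odd p" using prime_odd_nat[OF p(1)] prime_gt_1_nat[OF p(1)] by simp
    then obtain k where k: "p = Suc (2 * k)" by (auto elim: oddE)
    have "order G = p ^ 1 * (order G div p)" using p(2) by simp
    then obtain H where H: "subgroup H G" "card H = p"
      using sylow_thm[OF p(1) is_group _ assms(1)] by (metis power_one_right)
    then have "H \<subseteq> {\<one>}" using subgroup_odd_card_trivial square_one k by simp
    then have "card H \<le> 1" using card_mono[of "{\<one>}" H] by simp
    then show False using H(2) prime_gt_1_nat[OF p(1)] by simp
  qed
qed

section \<open>Equidistant linear codes with distance 2\<close>

lemma subspace_dist_zero_left:
  fixes X :: "('a::field^'n::finite) set"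
  assumes "vec.subspace X"
  shows "subspace_dist {0} X = vec.dim X"
  using vec.subspace_0[OF assms] by (simp add: subspace_dist_def)

lemma subspace_dist_commute: "subspace_dist X Y = subspace_dist Y X"
  by (simp add: subspace_dist_def Int_commute add.commute)

lemma equidistantD: "equidistant U r \<Longrightarrow> X \<in> U \<Longrightarrow> Y \<in> U \<Longrightarrow> X \<noteq> Y \<Longrightarrow> subspace_dist X Y = r"
  by (simp add: equidistant_def)

lemma equidistant_2_planes:
  fixes U :: "('a::field^'n::finite) set set"
  assumes U: "U \<subseteq> {X. vec.subspace X}" "{0} \<in> U" and equi: "equidistant U 2"
  shows "\<And>X. X \<in> U - {{0}} \<Longrightarrow> vec.subspace X \<and> vec.dim X = 2"
    and "\<And>X Y. X \<in> U - {{0}} \<Longrightarrow> Y \<in> U - {{0}} \<Longrightarrow> X \<noteq> Y \<Longrightarrow> vec.dim (X \<inter> Y) = 1"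
proof -
  show planes: "vec.subspace X \<and> vec.dim X = 2" if X: "X \<in> U - {{0}}" for X
  proof
    show "vec.subspace X" using X U(1) by blast
    moreover have "subspace_dist {0} X = 2" using equidistantD[OF equi U(2)] X by auto
    ultimately show "vec.dim X = 2" by (simp add: subspace_dist_zero_left)
  qed
  fix X Y assume X: "X \<in> U - {{0}}" and Y: "Y \<in> U - {{0}}" and "X \<noteq> Y"
  then have "subspace_dist X Y = 2" using equidistantD[OF equi] by simp
  then show "vec.dim (X \<inter> Y) = 1" using planes[OF X] planes[OF Y] unfolding subspace_dist_def by simp
qed

lemma card_linear_code_power_of_two:
  fixes U :: "('a::{finite,field}^'n::finite) set set"
  assumes "linear_code U"
  shows "\<exists>m. card U = 2 ^ m"
proof -
  have zero: "{0} \<in> U" using assms unfolding linear_code_def by simp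
  have "\<exists>pl. (\<forall>X\<in>U. \<forall>Y\<in>U. pl X Y \<in> U)
      \<and> (\<forall>X\<in>U. \<forall>Y\<in>U. \<forall>Z\<in>U. pl (pl X Y) Z = pl X (pl Y Z))
      \<and> (\<forall>X\<in>U. pl {0} X = X) \<and> (\<forall>X\<in>U. pl X X = {0})"
    using assms unfolding linear_code_def by (elim conjE exE) (intro exI conjI, assumption+, blast)
  then obtain pl where closed: "\<forall>X\<in>U. \<forall>Y\<in>U. pl X Y \<in> U"
    and assoc: "\<forall>X\<in>U. \<forall>Y\<in>U. \<forall>Z\<in>U. pl (pl X Y) Z = pl X (pl Y Z)"
    and unit: "\<forall>X\<in>U. pl {0} X = X"
    and square: "\<forall>X\<in>U. pl X X = {0}"
    by (elim exE conjE)
  let ?G = "\<lparr>carrier = U, monoid.mult = pl, one = {0}\<rparr>"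
  have "group ?G"
  proof (rule groupI)
    fix X assume "X \<in> carrier ?G"
    then show "\<exists>Y\<in>carrier ?G. Y \<otimes>\<^bsub>?G\<^esub> X = \<one>\<^bsub>?G\<^esub>" using square by auto
  qed (use closed assoc unit zero in auto)
  then have "\<exists>m. order ?G = 2 ^ m"
    by (rule group.order_power_of_two_if_square_one) (use square in simp_all)
  then show ?thesis by (simp add: order_def)
qed

lemma card_equidistant_2_code_le:
  fixes U :: "('a::{finite,field}^'n::finite) set set"
  assumes n: "CARD('n) \<ge> 4" and code: "linear_code U" and equi: "equidistant U 2"
  shows "card U \<le> 2 ^ floor_log ((\<Sum>i<CARD('n) - 1. CARD('a) ^ i) + 1)"
proof -
  let ?N = "\<Sum>i<CARD('n) - 1. CARD('a) ^ i"
  have U: "U \<subseteq> {X. vec.subspace X}" "{0} \<in> U" using code by (simp_all add: linear_code_def)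
  have "card (U - {{0}}) \<le> ?N"
    using card_planes_pairwise_meeting_le[OF n] equidistant_2_planes[OF U equi] by blast
  then have "card U \<le> ?N + 1" using U(2) by (simp add: card_Diff_singleton)
  moreover obtain m where m: "card U = 2 ^ m" using card_linear_code_power_of_two[OF code] by blast
  ultimately have "m \<le> floor_log (?N + 1)" using floor_log_le_iff[of "2 ^ m" "?N + 1"] by simp
  then show ?thesis using m by simp
qed

lemma mem_sym_diff_iff: "x \<in> sym_diff A B \<longleftrightarrow> (x \<in> A \<longleftrightarrow> x \<notin> B)"
  by auto

lemma linear_code_if_equidistant:
  fixes U :: "('a::field^'n::finite) set set"
  assumes U: "U \<subseteq> {X. vec.subspace X}" "{0} \<in> U"
    and card_U: "card U = 2 ^ K" and equi: "equidistant U r"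
  shows "linear_code U"
proof -
  have "finite U" using card_U by (simp add: card_ge_0_finite)
  then obtain h where h: "bij_betw h (Pow {..<K}) U"
    using finite_same_card_bij[of "Pow {..<K}" U] card_U by (auto simp: card_Pow)
  define g where "g = inv_into (Pow {..<K}) h"
  have g: "g X \<in> Pow {..<K}" "h (g X) = X" if "X \<in> U" for X
    using that h bij_betw_inv_into_right[OF h] unfolding g_def
    by (auto intro: inv_into_into simp: bij_betw_def)
  have gh: "g (h S) = S" if "S \<in> Pow {..<K}" for S
    using that h unfolding g_def by (simp add: bij_betw_inv_into_left)
  \<comment> \<open>symmetric difference on \<open>Pow {..<K}\<close>, translated by \<open>g {0}\<close> so that \<open>{0}\<close> becomes the identity\<close>
  define pl where "pl X Y = h (sym_diff (sym_diff (g X) (g Y)) (g {0}))" for X Y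
  have sd_Pow: "sym_diff (sym_diff (g X) (g Y)) (g {0}) \<in> Pow {..<K}" if "X \<in> U" "Y \<in> U" for X Y
    using g(1) that U(2) by blast
  have pl_U: "pl X Y \<in> U" if "X \<in> U" "Y \<in> U" for X Y
    using bij_betwE[OF h] sd_Pow[OF that] unfolding pl_def by blast
  have g_pl: "g (pl X Y) = sym_diff (sym_diff (g X) (g Y)) (g {0})" if "X \<in> U" "Y \<in> U" for X Y
    using gh[OF sd_Pow[OF that]] unfolding pl_def .
  have pl_zero: "pl {0} X = X" "pl X {0} = X" if "X \<in> U" for X
  proof -
    have "sym_diff (sym_diff (g {0}) (g X)) (g {0}) = g X"
      "sym_diff (sym_diff (g X) (g {0})) (g {0}) = g X"
      unfolding set_eq_iff mem_sym_diff_iff by blast+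
    then show "pl {0} X = X" "pl X {0} = X" unfolding pl_def by (simp_all only: g(2)[OF that])
  qed
  have pl_self: "pl X X = {0}" for X
  proof -
    have "sym_diff (sym_diff (g X) (g X)) (g {0}) = g {0}"
      unfolding set_eq_iff mem_sym_diff_iff by blast
    then show ?thesis unfolding pl_def by (simp only: g(2)[OF U(2)])
  qed
  have pl_cancel: "Y1 = Y2" if "X \<in> U" "Y1 \<in> U" "Y2 \<in> U" "pl Y1 X = pl Y2 X" for X Y1 Y2
  proof -
    have undo: "sym_diff (sym_diff (sym_diff (sym_diff A (g X)) (g {0})) (g {0})) (g X) = A" for A
      unfolding set_eq_iff mem_sym_diff_iff by blast
    have "sym_diff (sym_diff (g Y1) (g X)) (g {0}) = sym_diff (sym_diff (g Y2) (g X)) (g {0})"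
      using g_pl[of Y1 X] g_pl[of Y2 X] that by simp
    then have "g Y1 = g Y2" using undo by metis
    then show ?thesis using g(2) that(2,3) by metis
  qed
  have pl_commute: "pl X Y = pl Y X" for X Y
    unfolding pl_def by (simp only: Un_commute)
  have pl_assoc: "pl (pl X Y) Z = pl X (pl Y Z)" if XYZ: "X \<in> U" "Y \<in> U" "Z \<in> U" for X Y Z
  proof -
    have "sym_diff (sym_diff (g (pl X Y)) (g Z)) (g {0}) = sym_diff (sym_diff (g X) (g (pl Y Z))) (g {0})"
      unfolding g_pl[OF XYZ(1,2)] g_pl[OF XYZ(2,3)] set_eq_iff mem_sym_diff_iff by (intro allI) argo
    then show ?thesis unfolding pl_def[of "pl X Y" Z] pl_def[of X "pl Y Z"] by (rule arg_cong[where f = h])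
  qed
  have pl_isometry: "subspace_dist (pl Y1 X) (pl Y2 X) = subspace_dist Y1 Y2"
    if Y: "Y1 \<in> U" "Y2 \<in> U" and X: "X \<in> U" for Y1 Y2 X
  proof (cases "Y1 = Y2")
    case False
    then have "pl Y1 X \<noteq> pl Y2 X" using pl_cancel[OF X Y] by blast
    then have "subspace_dist (pl Y1 X) (pl Y2 X) = r"
      by (rule equidistantD[OF equi pl_U[OF Y(1) X] pl_U[OF Y(2) X]])
    also have "\<dots> = subspace_dist Y1 Y2" using equidistantD[OF equi Y False] by simp
    finally show ?thesis .
  qed (simp add: subspace_dist_def)
  show ?thesis
    unfolding linear_code_def
  proof (intro conjI exI[of _ pl])
    show "\<forall>X\<in>U. \<exists>Y\<in>U. pl X Y = {0}" using pl_self by blast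
    show "\<forall>X\<in>U. \<forall>Y\<in>U. pl X Y = pl Y X" using pl_commute by blast
  qed (simp_all add: U pl_U pl_zero pl_self pl_assoc pl_isometry)
qed

lemma sunflower_code_exists:
  assumes "2 ^ K \<le> (\<Sum>i<CARD('n::finite) - 1. CARD('a::{finite,field}) ^ i) + 1"
  shows "\<exists>U :: ('a^'n) set set. linear_code U \<and> equidistant U 2 \<and> card U = 2 ^ K
           \<and> (\<exists>W \<in> grass TYPE('a) TYPE('n) 1. U - {{0}} \<subseteq> {V \<in> grass TYPE('a) TYPE('n) 2. W \<subset> V})"
proof -
  have "1 \<le> vec.dim (UNIV :: ('a^'n) set)" unfolding vec_dim_card by simp
  then obtain W :: "('a^'n) set" where W: "vec.subspace W" "vec.dim W = 1"
    by (rule vec.choose_subspace_of_subspace)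
  define P where "P = {V. vec.subspace V \<and> vec.dim V = 2 \<and> W \<subseteq> V}"
  have "2 ^ K - 1 \<le> card P" using assms card_planes_through_line[OF W] unfolding P_def by simp
  then obtain F where F: "F \<subseteq> P" "card F = 2 ^ K - 1" by (rule obtain_subset_with_card_n)
  define U where "U = insert {0} F"
  have "{0} \<notin> F" using F(1) unfolding P_def by auto
  then have card_U: "card U = 2 ^ K" using F(2) unfolding U_def by simp
  have F_planes: "vec.subspace V" "vec.dim V = 2" "W \<subseteq> V" if "V \<in> F" for V
    using that F(1) unfolding P_def by auto
  have meet: "vec.dim (V \<inter> V') = 1" if "V \<in> F" "V' \<in> F" "V \<noteq> V'" for V V'
  proof -
    have "\<not> V \<subseteq> V'"
      using vec.subspace_dim_equal[of V V'] F_planes that by auto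
    then have "vec.dim (V \<inter> V') < 2" using dim_Int_less F_planes that(1,2) by metis
    moreover have "vec.dim W \<le> vec.dim (V \<inter> V')" using F_planes that(1,2) by (intro vec.dim_subset) blast
    ultimately show ?thesis using W(2) by simp
  qed
  have "subspace_dist X Y = 2" if XY: "X \<in> U" "Y \<in> U" "X \<noteq> Y" for X Y
  proof -
    consider "X = {0}" "Y \<in> F" | "Y = {0}" "X \<in> F" | "X \<in> F" "Y \<in> F"
      using XY unfolding U_def by blast
    then show ?thesis
    proof cases
      case 1
      then show ?thesis using subspace_dist_zero_left[OF F_planes(1)] F_planes(2) by simp
    next
      case 2
      then show ?thesis
        using subspace_dist_zero_left[OF F_planes(1)] F_planes(2) subspace_dist_commute by metis
    next
      case 3
      then show ?thesis using meet F_planes XY(3) unfolding subspace_dist_def by simp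
    qed
  qed
  then have equi: "equidistant U 2" unfolding equidistant_def by blast
  have "U \<subseteq> {X. vec.subspace X}" using F_planes vec.subspace_single_0 unfolding U_def by blast
  then have "linear_code U" using linear_code_if_equidistant card_U equi unfolding U_def by blast
  moreover have "W \<in> grass TYPE('a) TYPE('n) 1" using W by (simp add: grass_def)
  moreover have "U - {{0}} \<subseteq> {V \<in> grass TYPE('a) TYPE('n) 2. W \<subset> V}"
    using F_planes W(2) unfolding U_def grass_def by fastforce
  ultimately show ?thesis using equi card_U by blast
qed

theorem proposition4:
  fixes q n :: nat
  assumes "q = CARD('a::{finite,field})"
    and "n = CARD('n::finite)"
    and "n \<ge> 4"
  shows "Eq_dist TYPE('a) TYPE('n) 1
           = 2 ^ nat \<lfloor>log 2 ((real q ^ (n - 1) - 1) / (real q - 1) + 1)\<rfloor>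
       \<and> Eq_dist TYPE('a) TYPE('n) 1 \<le> Eq_max TYPE('a) TYPE('n)
       \<and> (\<exists>U :: ('a^'n) set set. linear_code U \<and> equidistant U 2
            \<and> card U = Eq_dist TYPE('a) TYPE('n) 1
            \<and> (\<exists>W \<in> grass TYPE('a) TYPE('n) 1.
                 U - {{0}} \<subseteq> {V \<in> grass TYPE('a) TYPE('n) 2. W \<subset> V}))"
proof -
  define N where "N = (\<Sum>i<n - 1. q ^ i)"
  define K where "K = floor_log (N + 1)"
  have "nat \<lfloor>log 2 ((real q ^ (n - 1) - 1) / (real q - 1) + 1)\<rfloor> = K"
    using geometric_sum_real_eq[of q "n - 1"] card_field_ge_2[where 'a='a] assms(1)
    by (simp add: K_def N_def floor_log_altdef add.commute)
  moreover obtain U :: "('a^'n) set set" where U: "linear_code U" "equidistant U 2" "card U = 2 ^ K"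
    "\<exists>W \<in> grass TYPE('a) TYPE('n) 1. U - {{0}} \<subseteq> {V \<in> grass TYPE('a) TYPE('n) 2. W \<subset> V}"
    using sunflower_code_exists[of K] floor_log_exp2_le[of "N + 1"] assms(1,2)
    unfolding K_def N_def by auto
  moreover have "Eq_dist TYPE('a) TYPE('n) 1 = 2 ^ K"
    unfolding Eq_dist_def
  proof (rule Max_eqI)
    fix c assume "c \<in> {card U | U :: ('a^'n) set set. linear_code U \<and> equidistant U (2 * 1)}"
    then obtain U' :: "('a^'n) set set" where "linear_code U'" "equidistant U' 2" "c = card U'"
      by auto
    then show "c \<le> 2 ^ K" using card_equidistant_2_code_le[of U'] assms unfolding K_def N_def by simp
  qed (use U in auto)
  moreover have "2 ^ K \<le> Eq_max TYPE('a) TYPE('n)"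
    unfolding Eq_max_def using U by (intro Max_ge) auto
  ultimately show ?thesis by auto
qed

end
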